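(* Fix finite $\mathcal{S}$, $\mathcal{A}$, $d_0\in\Delta(\mathcal{S})$, $\gamma\in[0,1)$ and a reward $\mathcal{R}:\mathcal{S}\times\mathcal{A}\to[0,1]$. Let $\mathcal{T}\neq\mathcal{T}'$ be transition models and $\delta=\frac12\max_{s,a}\|\mathcal{T}(\cdot\mid s,a)-\mathcal{T}'(\cdot\mid s,a)\|_1>0$. For $\varepsilon>0$ define $$H(\varepsilon,\delta)=\frac{(1+\varepsilon)+\sqrt{(1-\varepsilon)^2+4\varepsilon/\delta}}{2}.$$ If $1/(1-\gamma)\le H(\varepsilon,\delta)$, then $(\mathcal{T},\mathcal{T}')$ is $\varepsilon$-unexploitable relative to every policy set $\Pi$ and the task $(\mathcal{S},\mathcal{A},\_,d_0,\mathcal{R},\gamma)$. Moreover, the bound is tight: for every $\delta\in(0,1]$, $\varepsilon>0$ and $\gamma$ with $1/(1-\gamma)>H(\varepsilon,\delta)$, there exist a task with reward in $[0,1]$ (namely $\mathcal{S}=\mathcal{A}=\{0,1\}$, $d_0(0)=1$, $\mathcal{R}(s,a)=\mathbb{1}\{s=0\}$) and transition models $\mathcal{T}_1,\mathcal{T}_2$ with $\frac12\max_{s,a}\|\mathcal{T}_1(\cdot\mid s,a)-\mathcal{T}_2(\cdot\mid s,a)\|_1=\delta$ that are $\varepsilon$-exploitable relative to the set of stationary policies; specifically, state $1$ absorbing under both, and at state $0$: under $\mathcal{T}_1$ action $0$ self-loops and action $1$ moves to state $1$ with probability $\delta$ (else stays), while under $\mathcal{T}_2$ the roles of the two actions ar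e swapped.
   Context: For a transition model $\mathcal{T}$ and policy $\pi$ (stationary, or non-stationary $\pi=(\pi_0,\pi_1,\dots)$), $J_{\mathcal{T}}(\pi)=\mathbb{E}\big[\sum_{t\ge0}\gamma^t\mathcal{R}(s_t,a_t)\big]$ with $s_0\sim d_0$, $a_t\sim\pi_t(\cdot\mid s_t)$, $s_{t+1}\sim\mathcal{T}(\cdot\mid s_t,a_t)$. A task is an MDP without transition model, $(\mathcal{S},\mathcal{A},\_,d_0,\mathcal{R},\gamma)$; a policy set is any set of such policies. $(\mathcal{T},\mathcal{T}')$ is $\varepsilon$-exploitable relative to $\Pi$ and a task if there exist $\pi,\pi'\in\Pi$ with $J_{\mathcal{T}}(\pi)-J_{\mathcal{T}}(\pi')>\varepsilon$ and $J_{\mathcal{T}'}(\pi')-J_{\mathcal{T}'}(\pi)>\varepsilon$; otherwise $\varepsilon$-unexploitable. *)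

theory Defs
  imports "HOL-Probability.Probability" "HOL-Library.Numeral_Type"
begin

type_synonym ('s,'a) trans = "'s \<Rightarrow> 'a \<Rightarrow> 's pmf"
type_synonym ('s,'a) policy = "nat \<Rightarrow> 's \<Rightarrow> 'a pmf"

primrec state_dist :: "('s,'a) trans \<Rightarrow> 's pmf \<Rightarrow> ('s,'a) policy \<Rightarrow> nat \<Rightarrow> 's pmf" where
  "state_dist T d0 \<pi> 0 = d0"
| "state_dist T d0 \<pi> (Suc t) =
     bind_pmf (state_dist T d0 \<pi> t) (\<lambda>s. bind_pmf (\<pi> t s) (\<lambda>a. T s a))"

text \<open>Expected discounted return: by linearity of expectation,
E[sum_t gamma^t R(s_t,a_t)] = sum_t gamma^t E[R(s_t,a_t)].\<close>
definition J :: "('s,'a) trans \<Rightarrow> 's pmf \<Rightarrow> ('s \<Rightarrow> 'a \<Rightarrow> real) \<Rightarrow> real \<Rightarrow> ('s,'a) policy \<Rightarrow> real" where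
  "J T d0 R \<gamma> \<pi> = (\<Sum>t. \<gamma> ^ t *
     measure_pmf.expectation (state_dist T d0 \<pi> t)
       (\<lambda>s. measure_pmf.expectation (\<pi> t s) (\<lambda>a. R s a)))"

definition exploitable ::
  "real \<Rightarrow> ('s,'a) policy set \<Rightarrow> 's pmf \<Rightarrow> ('s \<Rightarrow> 'a \<Rightarrow> real) \<Rightarrow> real
     \<Rightarrow> ('s,'a) trans \<Rightarrow> ('s,'a) trans \<Rightarrow> bool" where
  "exploitable \<epsilon> Pol d0 R \<gamma> T T' \<longleftrightarrow>
     (\<exists>\<pi>\<in>Pol. \<exists>\<pi>'\<in>Pol. J T d0 R \<gamma> \<pi> - J T d0 R \<gamma> \<pi>' > \<epsilon> \<and>
                     J T' d0 R \<gamma> \<pi>' - J T' d0 R \<gamma> \<pi> > \<epsilon>)"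

definition stationary_policies :: "('s,'a) policy set" where
  "stationary_policies = {\<pi>. \<forall>t. \<pi> t = \<pi> 0}"

definition model_dist :: "('s::finite,'a::finite) trans \<Rightarrow> ('s,'a) trans \<Rightarrow> real" where
  "model_dist T T' = (1/2) * Max {(\<Sum>s'\<in>UNIV. \<bar>pmf (T s a) s' - pmf (T' s a) s'\<bar>) | s a. True}"

definition H :: "real \<Rightarrow> real \<Rightarrow> real" where
  "H \<epsilon> \<delta> = ((1 + \<epsilon>) + sqrt ((1 - \<epsilon>)^2 + 4 * \<epsilon> / \<delta>)) / 2"

definition move_pmf :: "real \<Rightarrow> 2 pmf" where
  "move_pmf \<delta> = map_pmf (\<lambda>b. if b then 1 else 0) (bernoulli_pmf \<delta>)"

definition T1_ex :: "real \<Rightarrow> (2,2) trans" where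
  "T1_ex \<delta> s a = (if s = 1 then return_pmf 1
                   else if a = 0 then return_pmf 0 else move_pmf \<delta>)"

definition T2_ex :: "real \<Rightarrow> (2,2) trans" where
  "T2_ex \<delta> s a = (if s = 1 then return_pmf 1
                   else if a = 1 then return_pmf 0 else move_pmf \<delta>)"

definition d0_ex :: "2 pmf" where "d0_ex = return_pmf 0"

definition R_ex :: "2 \<Rightarrow> 2 \<Rightarrow> real" where "R_ex s a = (if s = 0 then 1 else 0)"

end

theory Submission
  imports Defs
begin

(* Fix a policy and run it in both models from d0. The overlap sum_s min (mu_t s) (nu_t s) of
   the two state distributions at time t is the mass on which a maximal coupling keeps the two
   runs together; since every pair of transition kernels overlaps by at least 1 - delta, it
   shrinks at most by the factor 1 - delta per step. With rewards in [0, 1] the two values of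
   the policy therefore differ by at most sum_t gamma^t (1 - (1 - delta)^t)
   = 1/(1 - gamma) - 1/(1 - gamma (1 - delta)). Exploitability would force this gap to exceed
   epsilon, which is the quadratic inequality 1/(1 - gamma) > H epsilon delta. In the two-state
   example the two constant policies attain the gap exactly. *)

lemma expectation_pmf_finite:
  fixes M :: "'s::finite pmf" and f :: "'s \<Rightarrow> real"
  shows "measure_pmf.expectation M f = (\<Sum>s\<in>UNIV. pmf M s * f s)"
  by (subst integral_measure_pmf_real[where A = UNIV]) (auto simp: mult.commute)

lemma sum_pmf_UNIV: "(\<Sum>s\<in>UNIV. pmf (M :: 's::finite pmf) s) = 1"
  by (rule sum_pmf_eq_1) auto

lemma pmf_bind_pmf_finite:
  fixes M :: "'a::finite pmf"
  shows "pmf (bind_pmf M K) y = (\<Sum>x\<in>UNIV. pmf M x * pmf (K x) y)"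
  by (simp add: pmf_bind expectation_pmf_finite)

lemma expectation_pmf_unit_interval:
  fixes M :: "'s::finite pmf" and f :: "'s \<Rightarrow> real"
  assumes "\<And>s. 0 \<le> f s" "\<And>s. f s \<le> 1"
  shows "0 \<le> measure_pmf.expectation M f \<and> measure_pmf.expectation M f \<le> 1"
proof -
  have "(\<Sum>s\<in>UNIV. pmf M s * f s) \<le> (\<Sum>s\<in>UNIV. pmf M s)"
    using assms by (intro sum_mono mult_left_le) auto
  then show ?thesis
    using assms by (auto simp: expectation_pmf_finite sum_pmf_UNIV intro: sum_nonneg)
qed

definition overlap :: "'s::finite pmf \<Rightarrow> 's pmf \<Rightarrow> real" where
  "overlap M N = (\<Sum>s\<in>UNIV. min (pmf M s) (pmf N s))"

lemma overlap_commute: "overlap M N = overlap N M"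
  by (simp add: overlap_def min.commute)

lemma overlap_self [simp]: "overlap M M = 1"
  by (simp add: overlap_def sum_pmf_UNIV)

lemma overlap_le_1: "overlap M N \<le> 1"
proof -
  have "overlap M N \<le> (\<Sum>s\<in>UNIV. pmf M s)"
    unfolding overlap_def by (intro sum_mono) simp
  then show ?thesis by (simp add: sum_pmf_UNIV)
qed

lemma overlap_eq_1_minus_total_variation:
  "overlap M N = 1 - (1/2) * (\<Sum>s\<in>UNIV. \<bar>pmf M s - pmf N s\<bar>)"
proof -
  have "overlap M N = (\<Sum>s\<in>UNIV. (pmf M s + pmf N s - \<bar>pmf M s - pmf N s\<bar>) / 2)"
    unfolding overlap_def by (intro sum.cong) (auto simp: min_def)
  also have "\<dots> = 1 - (1/2) * (\<Sum>s\<in>UNIV. \<bar>pmf M s - pmf N s\<bar>)"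
    by (simp add: sum_divide_distrib[symmetric] sum.distrib sum_subtractf sum_pmf_UNIV)
  finally show ?thesis .
qed

lemma expectation_diff_le_1_minus_overlap:
  fixes M N :: "'s::finite pmf"
  assumes "\<And>s. 0 \<le> f s" "\<And>s. f s \<le> 1"
  shows "measure_pmf.expectation M f - measure_pmf.expectation N f \<le> 1 - overlap M N"
proof -
  have "pmf M s * f s - pmf N s * f s \<le> pmf M s - min (pmf M s) (pmf N s)" for s
  proof -
    have "(pmf M s - pmf N s) * f s \<le> max 0 (pmf M s - pmf N s)"
      using assms[of s] by (cases "pmf N s \<le> pmf M s")
        (auto intro: mult_left_le mult_nonpos_nonneg)
    then show ?thesis by (simp add: algebra_simps min_def max_def split: if_splits)
  qed
  then have "(\<Sum>s\<in>UNIV. pmf M s * f s - pmf N s * f s)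
      \<le> (\<Sum>s\<in>UNIV. pmf M s - min (pmf M s) (pmf N s))"
    by (rule sum_mono)
  then show ?thesis
    by (simp add: expectation_pmf_finite overlap_def sum_subtractf sum_pmf_UNIV)
qed

lemma overlap_bind_pmf_ge:
  fixes M N :: "'a::finite pmf" and K K' :: "'a \<Rightarrow> 'b::finite pmf"
  shows "(\<Sum>x\<in>UNIV. min (pmf M x) (pmf N x) * overlap (K x) (K' x))
    \<le> overlap (bind_pmf M K) (bind_pmf N K')"
proof -
  define w where "w x y = min (pmf M x) (pmf N x) * min (pmf (K x) y) (pmf (K' x) y)" for x y
  have "(\<Sum>x\<in>UNIV. w x y) \<le> min (pmf (bind_pmf M K) y) (pmf (bind_pmf N K') y)" for y
    unfolding pmf_bind_pmf_finite w_def
    by (intro min.boundedI sum_mono mult_mono) auto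
  then have "(\<Sum>y\<in>UNIV. \<Sum>x\<in>UNIV. w x y) \<le> overlap (bind_pmf M K) (bind_pmf N K')"
    unfolding overlap_def by (rule sum_mono)
  moreover have "(\<Sum>x\<in>UNIV. min (pmf M x) (pmf N x) * overlap (K x) (K' x))
      = (\<Sum>y\<in>UNIV. \<Sum>x\<in>UNIV. w x y)"
    unfolding overlap_def w_def sum_distrib_left by (rule sum.swap)
  ultimately show ?thesis by simp
qed

lemma overlap_bind_pmf_ge_const:
  assumes "\<And>x. c \<le> overlap (K x) (K' x)"
  shows "c * overlap M N \<le> overlap (bind_pmf M K) (bind_pmf N K')"
proof -
  have "c * overlap M N = (\<Sum>x\<in>UNIV. min (pmf M x) (pmf N x) * c)"
    by (simp add: overlap_def sum_distrib_left mult.commute)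
  also have "\<dots> \<le> (\<Sum>x\<in>UNIV. min (pmf M x) (pmf N x) * overlap (K x) (K' x))"
    using assms by (intro sum_mono mult_left_mono) auto
  also have "\<dots> \<le> overlap (bind_pmf M K) (bind_pmf N K')"
    by (rule overlap_bind_pmf_ge)
  finally show ?thesis .
qed

lemma overlap_state_dist_ge:
  fixes T T' :: "('s::finite, 'a::finite) trans"
  assumes "0 \<le> c" and "\<And>s a. c \<le> overlap (T s a) (T' s a)"
  shows "c ^ t \<le> overlap (state_dist T d0 \<pi> t) (state_dist T' d0 \<pi> t)"
proof (induction t)
  case 0
  show ?case by simp
next
  case (Suc t)
  have "c \<le> overlap (bind_pmf (\<pi> t s) (T s)) (bind_pmf (\<pi> t s) (T' s))" for s
    using overlap_bind_pmf_ge_const[of c "T s" "T' s" "\<pi> t s" "\<pi> t s"] assms(2) by simp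
  then have "c * overlap (state_dist T d0 \<pi> t) (state_dist T' d0 \<pi> t)
      \<le> overlap (state_dist T d0 \<pi> (Suc t)) (state_dist T' d0 \<pi> (Suc t))"
    by (simp add: overlap_bind_pmf_ge_const)
  moreover have "c ^ Suc t \<le> c * overlap (state_dist T d0 \<pi> t) (state_dist T' d0 \<pi> t)"
    using Suc.IH assms(1) by (simp add: mult_left_mono)
  ultimately show ?case by linarith
qed

lemma model_dist_set_finite:
  fixes T T' :: "('s::finite, 'a::finite) trans"
  shows "finite {(\<Sum>s'\<in>UNIV. \<bar>pmf (T s a) s' - pmf (T' s a) s'\<bar>) | s a. True}"
proof -
  have "{(\<Sum>s'\<in>UNIV. \<bar>pmf (T s a) s' - pmf (T' s a) s'\<bar>) | s a. True}
      = (\<lambda>(s, a). \<Sum>s'\<in>UNIV. \<bar>pmf (T s a) s' - pmf (T' s a) s'\<bar>) ` UNIV"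
    by auto
  then show ?thesis by simp
qed

lemma overlap_ge_1_minus_model_dist:
  fixes T T' :: "('s::finite, 'a::finite) trans"
  shows "1 - model_dist T T' \<le> overlap (T s a) (T' s a)"
proof -
  have "(\<Sum>s'\<in>UNIV. \<bar>pmf (T s a) s' - pmf (T' s a) s'\<bar>)
      \<le> Max {(\<Sum>s'\<in>UNIV. \<bar>pmf (T s a) s' - pmf (T' s a) s'\<bar>) | s a. True}"
    by (rule Max_ge[OF model_dist_set_finite]) blast
  then show ?thesis
    by (simp add: model_dist_def overlap_eq_1_minus_total_variation)
qed

lemma model_dist_le_1:
  fixes T T' :: "('s::finite, 'a::finite) trans"
  shows "model_dist T T' \<le> 1"
proof -
  let ?S = "{(\<Sum>s'\<in>UNIV. \<bar>pmf (T s a) s' - pmf (T' s a) s'\<bar>) | s a. True}"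
  have "Max ?S \<in> ?S"
    using model_dist_set_finite by (rule Max_in) auto
  then obtain s a where "Max ?S = (\<Sum>s'\<in>UNIV. \<bar>pmf (T s a) s' - pmf (T' s a) s'\<bar>)"
    by blast
  moreover have "0 \<le> overlap (T s a) (T' s a)"
    by (simp add: overlap_def sum_nonneg)
  ultimately show ?thesis
    by (simp add: model_dist_def overlap_eq_1_minus_total_variation)
qed

lemma discounted_sum_diff_le:
  fixes x y :: "nat \<Rightarrow> real"
  assumes "0 \<le> \<gamma>" "\<gamma> < 1" "0 \<le> c" "c \<le> 1"
    and "\<And>t. \<bar>x t\<bar> \<le> 1" "\<And>t. \<bar>y t\<bar> \<le> 1"
    and "\<And>t. x t - y t \<le> 1 - c ^ t"
  shows "(\<Sum>t. \<gamma> ^ t * x t) - (\<Sum>t. \<gamma> ^ t * y t) \<le> 1 / (1 - \<gamma>) - 1 / (1 - \<gamma> * c)"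
proof -
  have "\<gamma> * c \<le> \<gamma>"
    using assms by (intro mult_left_le) auto
  then have geom: "(\<lambda>t. \<gamma> ^ t) sums (1 / (1 - \<gamma>))" "(\<lambda>t. (\<gamma> * c) ^ t) sums (1 / (1 - \<gamma> * c))"
    using assms by (auto intro!: geometric_sums)
  have bounded: "summable (\<lambda>t. \<gamma> ^ t * z t)" if "\<And>t. \<bar>z t\<bar> \<le> 1" for z :: "nat \<Rightarrow> real"
  proof (rule summable_comparison_test')
    show "norm (\<gamma> ^ t * z t) \<le> \<gamma> ^ t" for t
      using that[of t] assms(1) by (simp add: abs_mult mult_left_le)
  qed (use geom(1) sums_summable in blast)
  have "(\<Sum>t. \<gamma> ^ t * x t) - (\<Sum>t. \<gamma> ^ t * y t) = (\<Sum>t. \<gamma> ^ t * (x t - y t))"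
    using bounded[OF assms(5)] bounded[OF assms(6)]
    by (simp add: suminf_diff right_diff_distrib)
  also have "\<dots> \<le> (\<Sum>t. \<gamma> ^ t - (\<gamma> * c) ^ t)"
  proof (rule suminf_le)
    show "\<gamma> ^ t * (x t - y t) \<le> \<gamma> ^ t - (\<gamma> * c) ^ t" for t
      using mult_left_mono[OF assms(7)[of t] zero_le_power[OF assms(1)]]
      by (simp add: power_mult_distrib right_diff_distrib)
    show "summable (\<lambda>t. \<gamma> ^ t * (x t - y t))"
      using bounded[OF assms(5)] bounded[OF assms(6)]
      by (simp add: right_diff_distrib summable_diff)
    show "summable (\<lambda>t. \<gamma> ^ t - (\<gamma> * c) ^ t)"
      using geom by (intro summable_diff sums_summable)
  qed
  also have "\<dots> = 1 / (1 - \<gamma>) - 1 / (1 - \<gamma> * c)"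
    using sums_unique[OF sums_diff[OF geom]] by simp
  finally show ?thesis .
qed

lemma J_model_diff_le:
  fixes T T' :: "('s::finite, 'a::finite) trans"
  assumes "0 \<le> \<gamma>" "\<gamma> < 1" and R: "\<And>s a. 0 \<le> R s a" "\<And>s a. R s a \<le> 1"
    and "0 \<le> c" and c: "\<And>s a. c \<le> overlap (T s a) (T' s a)"
  shows "J T d0 R \<gamma> \<pi> - J T' d0 R \<gamma> \<pi> \<le> 1 / (1 - \<gamma>) - 1 / (1 - \<gamma> * c)"
proof -
  define r where "r t s = measure_pmf.expectation (\<pi> t s) (R s)" for t s
  define v where "v U t = measure_pmf.expectation (state_dist U d0 \<pi> t) (r t)" for U t
  have r: "0 \<le> r t s \<and> r t s \<le> 1" for t s
    unfolding r_def using R by (intro expectation_pmf_unit_interval)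
  then have v: "\<bar>v U t\<bar> \<le> 1" for U t
    unfolding v_def using expectation_pmf_unit_interval[of "r t"] by (simp add: abs_le_iff)
  have "v T t - v T' t \<le> 1 - c ^ t" for t
  proof -
    have "v T t - v T' t \<le> 1 - overlap (state_dist T d0 \<pi> t) (state_dist T' d0 \<pi> t)"
      unfolding v_def using r by (intro expectation_diff_le_1_minus_overlap) auto
    moreover have "c ^ t \<le> overlap (state_dist T d0 \<pi> t) (state_dist T' d0 \<pi> t)"
      using \<open>0 \<le> c\<close> c by (rule overlap_state_dist_ge)
    ultimately show ?thesis by linarith
  qed
  moreover have "c \<le> 1"
    using c overlap_le_1 order_trans by blast
  ultimately have "(\<Sum>t. \<gamma> ^ t * v T t) - (\<Sum>t. \<gamma> ^ t * v T' t) \<le> 1 / (1 - \<gamma>) - 1 / (1 - \<gamma> * c)"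
    using assms v by (intro discounted_sum_diff_le) auto
  then show ?thesis
    by (simp add: J_def v_def r_def[abs_def])
qed

lemma le_H_iff:
  fixes h \<epsilon> \<delta> :: real
  assumes "1 \<le> h" "0 < \<delta>" "0 < \<epsilon>"
  shows "h \<le> H \<epsilon> \<delta> \<longleftrightarrow> \<delta> * (h - 1) * (h - \<epsilon>) \<le> \<epsilon>"
proof -
  define S where "S = (1 - \<epsilon>)\<^sup>2 + 4 * \<epsilon> / \<delta>"
  have "0 \<le> S"
    unfolding S_def using assms by simp
  have H_iff_sqrt: "h \<le> H \<epsilon> \<delta> \<longleftrightarrow> 2 * h - 1 - \<epsilon> \<le> sqrt S"
    unfolding H_def S_def by (simp add: field_simps)
  have "\<delta> * (h - 1) * (h - \<epsilon>) \<le> \<epsilon> \<longleftrightarrow> (h - 1) * (h - \<epsilon>) \<le> \<epsilon> / \<delta>"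
    using assms by (simp add: pos_le_divide_eq mult.commute mult.left_commute)
  also have "\<dots> \<longleftrightarrow> (2 * h - 1 - \<epsilon>)\<^sup>2 \<le> S"
  proof -
    have "(2 * h - 1 - \<epsilon>)\<^sup>2 = 4 * ((h - 1) * (h - \<epsilon>)) + (1 - \<epsilon>)\<^sup>2"
      by (simp add: power2_eq_square algebra_simps)
    moreover have "4 * \<epsilon> / \<delta> = 4 * (\<epsilon> / \<delta>)"
      by simp
    ultimately show ?thesis
      unfolding S_def by linarith
  qed
  finally have quadratic_iff: "\<delta> * (h - 1) * (h - \<epsilon>) \<le> \<epsilon> \<longleftrightarrow> (2 * h - 1 - \<epsilon>)\<^sup>2 \<le> S" .
  show ?thesis
  proof (cases "0 \<le> 2 * h - 1 - \<epsilon>")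
    case True
    then have "2 * h - 1 - \<epsilon> \<le> sqrt S \<longleftrightarrow> (2 * h - 1 - \<epsilon>)\<^sup>2 \<le> S"
      by (metis abs_of_nonneg real_sqrt_abs real_sqrt_le_iff)
    then show ?thesis
      using H_iff_sqrt quadratic_iff by simp
  next
    case False
    then have "\<delta> * (h - 1) * (h - \<epsilon>) \<le> \<epsilon>"
      using assms by (smt (verit) mult_nonneg_nonpos mult_nonneg_nonneg)
    then show ?thesis
      using H_iff_sqrt False \<open>0 \<le> S\<close> by (smt (verit) real_sqrt_ge_zero)
  qed
qed

lemma discount_gap_le_iff_le_H:
  fixes \<gamma> \<epsilon> \<delta> :: real
  assumes "0 \<le> \<gamma>" "\<gamma> < 1" "0 < \<delta>" "0 < \<epsilon>"
  shows "1 / (1 - \<gamma>) - 1 / (1 - \<gamma> * (1 - \<delta>)) \<le> \<epsilon> \<longleftrightarrow> 1 / (1 - \<gamma>) \<le> H \<epsilon> \<delta>"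
proof -
  define h where "h = 1 / (1 - \<gamma>)"
  have "1 \<le> h"
    unfolding h_def using assms by simp
  have \<gamma>: "\<gamma> = (h - 1) / h"
    unfolding h_def using assms by (simp add: field_simps)
  have "0 < 1 + (h - 1) * \<delta>"
    using \<open>1 \<le> h\<close> assms by (smt (verit) mult_nonneg_nonneg)
  then have "1 / (1 - \<gamma>) - 1 / (1 - \<gamma> * (1 - \<delta>)) = h * (h - 1) * \<delta> / (1 + (h - 1) * \<delta>)"
    unfolding h_def[symmetric] \<gamma> using \<open>1 \<le> h\<close> by (simp add: field_simps)
  also have "\<dots> \<le> \<epsilon> \<longleftrightarrow> \<delta> * (h - 1) * (h - \<epsilon>) \<le> \<epsilon>"
    using \<open>0 < 1 + (h - 1) * \<delta>\<close> by (simp add: pos_divide_le_eq algebra_simps)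
  also have "\<dots> \<longleftrightarrow> h \<le> H \<epsilon> \<delta>"
    using le_H_iff[OF \<open>1 \<le> h\<close> assms(3,4)] by simp
  finally show ?thesis
    unfolding h_def .
qed

lemma not_exploitable_if_le_H:
  fixes T T' :: "('s::finite, 'a::finite) trans"
  assumes "0 \<le> \<gamma>" "\<gamma> < 1" and R: "\<And>s a. 0 \<le> R s a" "\<And>s a. R s a \<le> 1"
    and "0 < model_dist T T'" "0 < \<epsilon>" "1 / (1 - \<gamma>) \<le> H \<epsilon> (model_dist T T')"
  shows "\<not> exploitable \<epsilon> Pol d0 R \<gamma> T T'"
proof
  define \<delta> where "\<delta> = model_dist T T'"
  have "0 \<le> 1 - \<delta>"
    using model_dist_le_1 by (simp add: \<delta>_def)
  have overlap: "1 - \<delta> \<le> overlap (T s a) (T' s a)" "1 - \<delta> \<le> overlap (T' s a) (T s a)" for s a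
    using overlap_ge_1_minus_model_dist by (auto simp: \<delta>_def overlap_commute)
  have gap: "1 / (1 - \<gamma>) - 1 / (1 - \<gamma> * (1 - \<delta>)) \<le> \<epsilon>"
    using discount_gap_le_iff_le_H assms by (simp add: \<delta>_def)
  have "J T d0 R \<gamma> \<pi> - J T' d0 R \<gamma> \<pi> \<le> 1 / (1 - \<gamma>) - 1 / (1 - \<gamma> * (1 - \<delta>))"
    "J T' d0 R \<gamma> \<pi> - J T d0 R \<gamma> \<pi> \<le> 1 / (1 - \<gamma>) - 1 / (1 - \<gamma> * (1 - \<delta>))" for \<pi>
    using assms \<open>0 \<le> 1 - \<delta>\<close> overlap by (blast intro: J_model_diff_le)+
  moreover assume "exploitable \<epsilon> Pol d0 R \<gamma> T T'"
  ultimately show False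
    using gap unfolding exploitable_def by (smt (verit))
qed

lemma UNIV_2: "(UNIV :: 2 set) = {0, 1}"
  by (rule card_subset_eq[symmetric]) simp_all

lemma pmf_move_pmf:
  assumes "0 \<le> \<delta>" "\<delta> \<le> 1"
  shows "pmf (move_pmf \<delta>) x = (if x = 1 then \<delta> else 1 - \<delta>)"
proof -
  have "pmf (move_pmf \<delta>) (if b then 1 else 0) = pmf (bernoulli_pmf \<delta>) b" for b
    unfolding move_pmf_def by (rule pmf_map_inj') (simp add: inj_def)
  moreover have "x = (if x = 1 then 1 else 0)"
    using UNIV_2 by auto
  ultimately show ?thesis
    using assms by (metis pmf_bernoulli_False pmf_bernoulli_True)
qed

lemma model_dist_T1_T2_ex:
  assumes "0 \<le> \<delta>" "\<delta> \<le> 1"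
  shows "model_dist (T1_ex \<delta>) (T2_ex \<delta>) = \<delta>"
proof -
  have "(\<Sum>s'\<in>UNIV. \<bar>pmf (T1_ex \<delta> s a) s' - pmf (T2_ex \<delta> s a) s'\<bar>) = (if s = 0 then 2 * \<delta> else 0)"
    for s a
  proof -
    have "s \<in> {0, 1}" "a \<in> {0, 1}"
      using UNIV_2 by blast+
    then show ?thesis
      using assms by (auto simp: T1_ex_def T2_ex_def pmf_move_pmf UNIV_2)
  qed
  then have "{(\<Sum>s'\<in>UNIV. \<bar>pmf (T1_ex \<delta> s a) s' - pmf (T2_ex \<delta> s a) s'\<bar>) | s a. True}
      = {if s = 0 then 2 * \<delta> else 0 | s :: 2. True}"
    by auto
  also have "\<dots> = {2 * \<delta>, 0}"
    by (auto intro: exI[of _ 0] exI[of _ 1])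
  finally show ?thesis
    using assms by (simp add: model_dist_def)
qed

lemma pmf_state_dist_absorbing:
  assumes "\<And>a. T 1 a = return_pmf 1"
  shows "pmf (state_dist T d0_ex (\<lambda>t s. return_pmf a) t) 0 = pmf (T 0 a) 0 ^ t"
  by (induction t) (simp_all add: d0_ex_def pmf_bind_pmf_finite UNIV_2 assms bind_return_pmf)

lemma J_constant_policy_absorbing:
  assumes "\<And>a. T 1 a = return_pmf 1" "0 \<le> \<gamma>" "\<gamma> < 1"
  shows "J T d0_ex R_ex \<gamma> (\<lambda>t s. return_pmf a) = 1 / (1 - \<gamma> * pmf (T 0 a) 0)"
proof -
  have "\<gamma> * pmf (T 0 a) 0 \<le> \<gamma>"
    using assms by (intro mult_left_le pmf_le_1) auto
  then have "norm (\<gamma> * pmf (T 0 a) 0) < 1"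
    using assms by simp
  moreover have "J T d0_ex R_ex \<gamma> (\<lambda>t s. return_pmf a) = (\<Sum>t. (\<gamma> * pmf (T 0 a) 0) ^ t)"
    unfolding J_def expectation_return_pmf
    by (simp add: expectation_pmf_finite UNIV_2 R_ex_def pmf_state_dist_absorbing assms
        power_mult_distrib)
  ultimately show ?thesis
    by (simp add: suminf_geometric)
qed

lemma exploitable_T1_T2_ex:
  assumes "0 < \<delta>" "\<delta> \<le> 1" "0 < \<epsilon>" "0 \<le> \<gamma>" "\<gamma> < 1" "H \<epsilon> \<delta> < 1 / (1 - \<gamma>)"
  shows "exploitable \<epsilon> stationary_policies d0_ex R_ex \<gamma> (T1_ex \<delta>) (T2_ex \<delta>)"
proof -
  define stay go :: "(2, 2) policy" where "stay = (\<lambda>t s. return_pmf 0)" and "go = (\<lambda>t s. return_pmf 1)"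
  have "stay \<in> stationary_policies" "go \<in> stationary_policies"
    by (simp_all add: stationary_policies_def stay_def go_def)
  moreover have "J (T1_ex \<delta>) d0_ex R_ex \<gamma> stay = 1 / (1 - \<gamma>)"
    "J (T1_ex \<delta>) d0_ex R_ex \<gamma> go = 1 / (1 - \<gamma> * (1 - \<delta>))"
    "J (T2_ex \<delta>) d0_ex R_ex \<gamma> go = 1 / (1 - \<gamma>)"
    "J (T2_ex \<delta>) d0_ex R_ex \<gamma> stay = 1 / (1 - \<gamma> * (1 - \<delta>))"
    using assms by (simp_all add: stay_def go_def J_constant_policy_absorbing T1_ex_def T2_ex_def
        pmf_move_pmf)
  moreover have "\<epsilon> < 1 / (1 - \<gamma>) - 1 / (1 - \<gamma> * (1 - \<delta>))"
    using discount_gap_le_iff_le_H[of \<gamma> \<delta> \<epsilon>] assms by linarith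
  ultimately show ?thesis
    unfolding exploitable_def by (intro bexI[of _ stay] bexI[of _ go] conjI) simp_all
qed

theorem mainTheorem14:
  shows
   "(\<forall>(T :: ('s::finite,'a::finite) trans) T' (d0 :: 's pmf) (R :: 's \<Rightarrow> 'a \<Rightarrow> real) \<gamma> \<epsilon>
        (Pol :: ('s,'a) policy set).
       0 \<le> \<gamma> \<and> \<gamma> < 1 \<and> (\<forall>s a. 0 \<le> R s a \<and> R s a \<le> 1) \<and> T \<noteq> T' \<and>
       model_dist T T' > 0 \<and> \<epsilon> > 0 \<and> 1 / (1 - \<gamma>) \<le> H \<epsilon> (model_dist T T')
       \<longrightarrow> \<not> exploitable \<epsilon> Pol d0 R \<gamma> T T')
    \<and>
    (\<forall>\<delta> \<epsilon> \<gamma>. 0 < \<delta> \<and> \<delta> \<le> 1 \<and> \<epsilon> > 0 \<and> 0 \<le> \<gamma> \<and> \<gamma> < 1 \<and> 1 / (1 - \<gamma>) > H \<epsilon> \<delta>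
       \<longrightarrow> (\<forall>s a. 0 \<le> R_ex s a \<and> R_ex s a \<le> 1) \<and>
           model_dist (T1_ex \<delta>) (T2_ex \<delta>) = \<delta> \<and>
           exploitable \<epsilon> stationary_policies d0_ex R_ex \<gamma> (T1_ex \<delta>) (T2_ex \<delta>))"
  apply (rule conjI; intro allI impI)
  subgoal by (elim conjE, rule not_exploitable_if_le_H) auto
  subgoal by (auto simp: R_ex_def model_dist_T1_T2_ex intro!: exploitable_T1_T2_ex)
  done

end
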